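(* Let $n,k,l$ be nonnegative integers with $k+l\le n$, let $\alpha,\beta>-1$, set $\sigma=\alpha+\beta+1$, and for $i=k+l,\ldots,n$ and $h=k,\ldots,n-l$ define \[ c_{ih}=\frac{(\alpha+2l+1)_{i-k-l}}{(i-k-l)!}\binom{n}{h}^{-1}\binom{n-k-l}{h-k}\,Q_{i-k-l}(n-l-h;\,\alpha+2l,\,\beta+2k,\,n-k-l). \] Then for each fixed $h$ (and whenever the indices involved lie in the range $k+l\le i\le n$): \[ c_{k+l,h}=\binom{n}{h}^{-1}\binom{n-k-l}{h-k}, \] \[ c_{k+l+1,h}=c_{k+l,h}\left[\alpha+2l+1-\frac{(\sigma+2k+2l+1)(l+h-n)}{k+l-n}\right], \] and for $i=k+l+2,k+l+3,\ldots,n$, \[ c_{ih}=K_h(i)\,c_{i-1,h}+L(i)\,c_{i-2,h}, \] where \[ M(i)=\frac{(i-k-l-1)(n+i+\alpha+\beta)(i+k+\beta-l-1)(2i+\alpha+\beta)}{(2i+\alpha+\beta-2)(i+k+l+\alpha+\beta)(i+l+\alpha-k)(i-n-1)}, \] \[ K_h(i)=\frac{\alpha+l+i-k}{i-k-l}\left[1-M(i)-\frac{(l+h-n)(2i+\alpha+\beta-1)_2}{(i+k+l+\alpha+\beta)(\alpha+l+i-k)(i-n-1)}\right], \] \[ L(i)=\frac{(\alpha+l+i-k-1)_2}{(i-k-l-1)_2}\,M(i). \]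
   Context: Pochhammer symbol: $(a)_0=1$, $(a)_j=a(a+1)\cdots(a+j-1)$. Hahn polynomials: for a nonnegative integer $N$, $a,b>-1$ and $m=0,1,\ldots,N$, $Q_m(x;a,b,N)=\sum_{j=0}^m\frac{(-m)_j(m+a+b+1)_j(-x)_j}{j!\,(a+1)_j\,(-N)_j}$. (The numbers $c_{ih}$ are the coefficients of the modified Jacobi polynomial $J_{i,k,l}^{(\alpha,\beta)}(x)=(1-x)^lx^kR^{(\alpha+2l,\beta+2k)}_{i-k-l}(x)$ in the Bernstein basis $B^n_h(x)=\binom nh x^h(1-x)^{n-h}$, $h=k,\ldots,n-l$, where $R^{(a,b)}_m(x)=\frac{(a+1)_m}{m!}\sum_{j=0}^m\frac{(-m)_j(m+a+b+1)_j}{j!(a+1)_j}(1-x)^j$.) *)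

theory Defs
  imports "HOL-Analysis.Analysis"
begin

definition hahnQ :: "nat \<Rightarrow> real \<Rightarrow> real \<Rightarrow> real \<Rightarrow> nat \<Rightarrow> real" where
  "hahnQ m x a b N = (\<Sum>j=0..m.
      pochhammer (- real m) j * pochhammer (real m + a + b + 1) j * pochhammer (- x) j
      / (fact j * pochhammer (a + 1) j * pochhammer (- real N) j))"

definition cc :: "real \<Rightarrow> real \<Rightarrow> nat \<Rightarrow> nat \<Rightarrow> nat \<Rightarrow> nat \<Rightarrow> nat \<Rightarrow> real" where
  "cc \<alpha> \<beta> n k l i h =
     pochhammer (\<alpha> + 2 * real l + 1) (i - k - l) / fact (i - k - l)
     * (real (n - k - l choose (h - k)) / real (n choose h))
     * hahnQ (i - k - l) (real n - real l - real h) (\<alpha> + 2 * real l) (\<beta> + 2 * real k) (n - k - l)"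

definition Mf :: "real \<Rightarrow> real \<Rightarrow> nat \<Rightarrow> nat \<Rightarrow> nat \<Rightarrow> nat \<Rightarrow> real" where
  "Mf \<alpha> \<beta> n k l i =
     ((real i - real k - real l - 1) * (real n + real i + \<alpha> + \<beta>)
       * (real i + real k + \<beta> - real l - 1) * (2 * real i + \<alpha> + \<beta>))
     / ((2 * real i + \<alpha> + \<beta> - 2) * (real i + real k + real l + \<alpha> + \<beta>)
       * (real i + real l + \<alpha> - real k) * (real i - real n - 1))"

definition Kf :: "real \<Rightarrow> real \<Rightarrow> nat \<Rightarrow> nat \<Rightarrow> nat \<Rightarrow> nat \<Rightarrow> nat \<Rightarrow> real" where
  "Kf \<alpha> \<beta> n k l h i =
     (\<alpha> + real l + real i - real k) / (real i - real k - real l)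
     * (1 - Mf \<alpha> \<beta> n k l i
        - ((real l + real h - real n) * pochhammer (2 * real i + \<alpha> + \<beta> - 1) 2)
          / ((real i + real k + real l + \<alpha> + \<beta>) * (\<alpha> + real l + real i - real k)
             * (real i - real n - 1)))"

definition Lf :: "real \<Rightarrow> real \<Rightarrow> nat \<Rightarrow> nat \<Rightarrow> nat \<Rightarrow> nat \<Rightarrow> real" where
  "Lf \<alpha> \<beta> n k l i =
     pochhammer (\<alpha> + real l + real i - real k - 1) 2
     / pochhammer (real i - real k - real l - 1) 2 * Mf \<alpha> \<beta> n k l i"

end

theory Submission
  imports Defs
begin

text \<open>
  Put \<open>m = i - k - l\<close>, \<open>a = \<alpha> + 2l\<close>, \<open>b = \<beta> + 2k\<close>, \<open>N = n - k - l\<close> and \<open>x = n - l - h\<close>.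
  Up to the factor \<open>binom(n-k-l, h-k) / binom(n, h)\<close>, \<open>c\<^sub>i\<^sub>h\<close> is the Hahn polynomial
  \<open>Q\<^sub>m(x; a, b, N)\<close> weighted by \<open>(a+1)\<^sub>m / m!\<close>. The recurrence for \<open>c\<^sub>i\<^sub>h\<close> is the three-term
  recurrence of Hahn polynomials in the degree,
  \<open>Q\<^sub>m = (1 - M\<^sub>m) Q\<^sub>m\<^sub>-\<^sub>1 + M\<^sub>m Q\<^sub>m\<^sub>-\<^sub>2 + c\<^sub>m x Q\<^sub>m\<^sub>-\<^sub>1\<close>, rescaled by these weights.
  It is proved coefficientwise in the basis \<open>(-x)\<^sub>j / (j! (a+1)\<^sub>j (-N)\<^sub>j)\<close>: multiplication by
  \<open>x\<close> acts on it through \<open>x (-x)\<^sub>j = j (-x)\<^sub>j - (-x)\<^sub>j\<^sub>+\<^sub>1\<close>, and once denominators are cleared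
  the identity for the coefficients is a polynomial identity in a few Pochhammer symbols.
\<close>

definition hahn_num :: "real \<Rightarrow> real \<Rightarrow> nat \<Rightarrow> nat \<Rightarrow> real" where
  "hahn_num a b m j = pochhammer (- real m) j * pochhammer (real m + a + b + 1) j"

definition hahn_den :: "real \<Rightarrow> nat \<Rightarrow> nat \<Rightarrow> real" where
  "hahn_den a N j = fact j * pochhammer (a + 1) j * pochhammer (- real N) j"

text \<open>Coefficients of \<open>x Q\<^sub>m(x)\<close>; for \<open>j = 0\<close> the truncated \<open>j - 1\<close> is harmless
  because of the factor \<open>j\<close>.\<close>

definition hahn_times_x_num :: "real \<Rightarrow> real \<Rightarrow> nat \<Rightarrow> nat \<Rightarrow> nat \<Rightarrow> real" where
  "hahn_times_x_num a b N m j =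
     real j * hahn_num a b m j
     - hahn_num a b m (j - 1) * real j * (a + real j) * (real j - 1 - real N)"

lemma hahn_num_recurrence_cleared_Suc_Suc:
  fixes a b :: real and N p r :: nat
  defines "(m::real) \<equiv> real p + 2"
  shows "(2*m + a + b - 2) * (m + a + b) * (m + a) * (m - real N - 1) * hahn_num a b (p + 2) (r + 2)
    = ((2*m + a + b - 2) * (m + a + b) * (m + a) * (m - real N - 1)
        - (m - 1) * (real N + m + a + b) * (m + b - 1) * (2*m + a + b)) * hahn_num a b (p + 1) (r + 2)
      + (m - 1) * (real N + m + a + b) * (m + b - 1) * (2*m + a + b) * hahn_num a b p (r + 2)
      + (2*m + a + b - 2) * (2*m + a + b - 1) * (2*m + a + b) * hahn_times_x_num a b N (p + 1) (r + 2)"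
proof -
  \<comment> \<open>Every Pochhammer symbol involved is an explicit polynomial multiple of \<open>W\<close> or \<open>V\<close>.\<close>
  define W where "W = pochhammer (- real p) r"
  define V where "V = pochhammer (real p + a + b + 3) r"
  have e1: "pochhammer (- real (p + 2)) (r + 2) = (- real p - 2) * (- real p - 1) * W"
    unfolding W_def numeral_2_eq_2 add_Suc_right add_0_right
    by (simp only: pochhammer_rec) (simp add: algebra_simps)
  have e2: "pochhammer (- real (p + 1)) (r + 2) = (- real p - 1) * W * (- real p + r)"
    unfolding W_def numeral_2_eq_2 add_Suc_right add_0_right
    by (subst pochhammer_rec) (simp add: pochhammer_Suc algebra_simps)
  have e3: "pochhammer (- real p) (r + 2) = W * (- real p + r) * (- real p + r + 1)"
    unfolding W_def numeral_2_eq_2 add_Suc_right add_0_right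
    by (simp only: pochhammer_Suc) (simp add: algebra_simps)
  have e4: "pochhammer (- real (p + 1)) (r + 1) = (- real p - 1) * W"
    unfolding W_def One_nat_def add_Suc_right add_0_right
    by (simp only: pochhammer_rec) (simp add: algebra_simps)
  have f1: "pochhammer (real (p + 2) + a + b + 1) (r + 2)
      = V * (real p + a + b + 3 + r) * (real p + a + b + 4 + r)"
    unfolding V_def numeral_2_eq_2 add_Suc_right add_0_right
    by (simp only: pochhammer_Suc) (simp add: algebra_simps)
  have f2: "pochhammer (real (p + 1) + a + b + 1) (r + 2)
      = (real p + a + b + 2) * V * (real p + a + b + 3 + r)"
    unfolding V_def numeral_2_eq_2 add_Suc_right add_0_right
    by (subst pochhammer_rec) (simp add: pochhammer_Suc algebra_simps)
  have f3: "pochhammer (real p + a + b + 1) (r + 2) = (real p + a + b + 1) * (real p + a + b + 2) * V"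
    unfolding V_def numeral_2_eq_2 add_Suc_right add_0_right
    by (simp only: pochhammer_rec) (simp add: algebra_simps)
  have f4: "pochhammer (real (p + 1) + a + b + 1) (r + 1) = (real p + a + b + 2) * V"
    unfolding V_def One_nat_def add_Suc_right add_0_right
    by (simp only: pochhammer_rec) (simp add: algebra_simps)
  have r1: "r + 2 - 1 = r + 1" by simp
  show ?thesis
    unfolding hahn_times_x_num_def r1 hahn_num_def m_def
    unfolding e1 e2 e3 e4 f1 f2 f3 f4
    unfolding of_nat_add of_nat_numeral of_nat_1
    by algebra
qed

lemma hahn_num_recurrence_cleared:
  fixes a b :: real and N p j :: nat
  defines "(m::real) \<equiv> real p + 2"
  shows "(2*m + a + b - 2) * (m + a + b) * (m + a) * (m - real N - 1) * hahn_num a b (p + 2) j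
    = ((2*m + a + b - 2) * (m + a + b) * (m + a) * (m - real N - 1)
        - (m - 1) * (real N + m + a + b) * (m + b - 1) * (2*m + a + b)) * hahn_num a b (p + 1) j
      + (m - 1) * (real N + m + a + b) * (m + b - 1) * (2*m + a + b) * hahn_num a b p j
      + (2*m + a + b - 2) * (2*m + a + b - 1) * (2*m + a + b) * hahn_times_x_num a b N (p + 1) j"
proof -
  consider "j = 0" | "j = 1" | r where "j = r + 2"
    by (metis One_nat_def add_2_eq_Suc' not0_implies_Suc)
  then show ?thesis
  proof cases
    case 1
    then show ?thesis by (simp add: hahn_times_x_num_def hahn_num_def)
  next
    case 2
    have "hahn_num a b q 1 = - real q * (real q + a + b + 1)" for q
      by (simp add: hahn_num_def)
    then show ?thesis
      unfolding 2 hahn_times_x_num_def m_def of_nat_add of_nat_numeral of_nat_1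
      by (simp add: hahn_num_def) algebra
  next
    case 3
    then show ?thesis
      unfolding m_def by (simp only: hahn_num_recurrence_cleared_Suc_Suc)
  qed
qed

definition hahn_rec_M :: "real \<Rightarrow> real \<Rightarrow> nat \<Rightarrow> nat \<Rightarrow> real" where
  "hahn_rec_M a b N m =
     (real m - 1) * (real N + real m + a + b) * (real m + b - 1) * (2 * real m + a + b)
     / ((2 * real m + a + b - 2) * (real m + a + b) * (real m + a) * (real m - real N - 1))"

definition hahn_rec_c :: "real \<Rightarrow> real \<Rightarrow> nat \<Rightarrow> nat \<Rightarrow> real" where
  "hahn_rec_c a b N m =
     pochhammer (2 * real m + a + b - 1) 2 / ((real m + a + b) * (real m + a) * (real m - real N - 1))"

lemma hahn_num_recurrence:
  assumes "a > -1" and "b > -1" and "p + 2 \<le> N"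
  shows "hahn_num a b (p + 2) j
    = (1 - hahn_rec_M a b N (p + 2)) * hahn_num a b (p + 1) j
      + hahn_rec_M a b N (p + 2) * hahn_num a b p j
      + hahn_rec_c a b N (p + 2) * hahn_times_x_num a b N (p + 1) j"
proof -
  define m where "m = real p + 2"
  define D where "D = (2*m + a + b - 2) * (m + a + b) * (m + a) * (m - real N - 1)"
  define E where "E = (m - 1) * (real N + m + a + b) * (m + b - 1) * (2*m + a + b)"
  define C where "C = (2*m + a + b - 2) * (2*m + a + b - 1) * (2*m + a + b)"
  have pos: "2*m + a + b - 2 > 0" "m + a + b > 0" "m + a > 0"
    using assms(1,2) by (simp_all add: m_def)
  moreover have "m - real N - 1 < 0"
    using assms(3) by (simp add: m_def)
  ultimately have "D \<noteq> 0"
    unfolding D_def by simp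
  have m: "real (p + 2) = m"
    by (simp add: m_def)
  have M: "hahn_rec_M a b N (p + 2) = E / D"
    unfolding hahn_rec_M_def m D_def E_def ..
  have c: "hahn_rec_c a b N (p + 2) = C / D"
  proof -
    have "pochhammer (2*m + a + b - 1) 2 = (2*m + a + b - 1) * (2*m + a + b)"
      by (simp add: numeral_2_eq_2 pochhammer_Suc algebra_simps)
    then show ?thesis
      unfolding hahn_rec_c_def m C_def D_def using pos(1) by (simp add: mult.assoc)
  qed
  have "hahn_num a b (p + 2) j = D * hahn_num a b (p + 2) j / D"
    using \<open>D \<noteq> 0\<close> by simp
  also have "\<dots> = ((D - E) * hahn_num a b (p + 1) j + E * hahn_num a b p j
      + C * hahn_times_x_num a b N (p + 1) j) / D"
    unfolding D_def E_def C_def m_def by (simp only: hahn_num_recurrence_cleared)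
  also have "\<dots> = (1 - E / D) * hahn_num a b (p + 1) j + E / D * hahn_num a b p j
      + C / D * hahn_times_x_num a b N (p + 1) j"
    using \<open>D \<noteq> 0\<close> by (simp add: field_simps)
  finally show ?thesis
    unfolding M c .
qed

lemma hahn_num_eq_0: "m < j \<Longrightarrow> hahn_num a b m j = 0"
  unfolding hahn_num_def using pochhammer_of_nat_eq_0_lemma[where 'a=real] by simp

lemma hahnQ_eq_sum_atMost:
  assumes "m \<le> M"
  shows "hahnQ m x a b N = (\<Sum>j\<le>M. hahn_num a b m j * pochhammer (- x) j / hahn_den a N j)"
proof -
  have "hahnQ m x a b N = (\<Sum>j\<le>m. hahn_num a b m j * pochhammer (- x) j / hahn_den a N j)"
    unfolding hahnQ_def hahn_num_def hahn_den_def atLeast0AtMost by (simp add: algebra_simps)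
  also have "\<dots> = (\<Sum>j\<le>M. hahn_num a b m j * pochhammer (- x) j / hahn_den a N j)"
    using assms by (intro sum.mono_neutral_left) (auto simp: hahn_num_eq_0)
  finally show ?thesis .
qed

lemma divide_hahn_den_eq_Suc:
  assumes "a > -1" and "j < N"
  shows "y / hahn_den a N j
    = y * ((real j + 1) * (a + real j + 1) * (real j - real N)) / hahn_den a N (Suc j)"
proof -
  have "(real j + 1) * (a + real j + 1) * (real j - real N) \<noteq> 0"
    using assms by auto
  moreover have "hahn_den a N (Suc j)
      = hahn_den a N j * ((real j + 1) * (a + real j + 1) * (real j - real N))"
    by (simp add: hahn_den_def pochhammer_Suc algebra_simps)
  ultimately show ?thesis
    by simp
qed

lemma times_hahnQ:
  assumes "a > -1" and "m < N"
  shows "x * hahnQ m x a b N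
    = (\<Sum>j\<le>Suc m. hahn_times_x_num a b N m j * pochhammer (- x) j / hahn_den a N j)"
proof -
  let ?P = "\<lambda>j. pochhammer (- x) j" and ?U = "hahn_num a b m" and ?D = "hahn_den a N"
  have shift: "(\<Sum>j\<le>Suc m. ?U j * ?P (Suc j) / ?D j)
      = (\<Sum>j\<le>Suc m. ?U (j - 1) * real j * (a + real j) * (real j - 1 - real N) * ?P j / ?D j)"
  proof -
    have "(\<Sum>j\<le>Suc m. ?U j * ?P (Suc j) / ?D j) = (\<Sum>j\<le>m. ?U j * ?P (Suc j) / ?D j)"
      by (simp add: hahn_num_eq_0)
    also have "\<dots> = (\<Sum>j\<le>m. ?U j * real (Suc j) * (a + real (Suc j))
        * (real (Suc j) - 1 - real N) * ?P (Suc j) / ?D (Suc j))"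
      using assms by (intro sum.cong refl) (simp add: divide_hahn_den_eq_Suc algebra_simps)
    also have "\<dots>
        = (\<Sum>j\<le>Suc m. ?U (j - 1) * real j * (a + real j) * (real j - 1 - real N) * ?P j / ?D j)"
      unfolding sum.atMost_Suc_shift[of _ m] by simp
    finally show ?thesis .
  qed
  have "x * hahnQ m x a b N = (\<Sum>j\<le>Suc m. ?U j * (x * ?P j) / ?D j)"
    by (simp add: hahnQ_eq_sum_atMost[of m "Suc m"] sum_distrib_left mult.left_commute
        del: sum.atMost_Suc)
  also have "\<dots> = (\<Sum>j\<le>Suc m. real j * ?U j * ?P j / ?D j)
      - (\<Sum>j\<le>Suc m. ?U j * ?P (Suc j) / ?D j)"
    unfolding sum_subtractf[symmetric]
    by (intro sum.cong refl) (simp add: pochhammer_Suc diff_divide_distrib[symmetric] algebra_simps)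
  also have "\<dots> = (\<Sum>j\<le>Suc m. hahn_times_x_num a b N m j * ?P j / ?D j)"
    unfolding shift hahn_times_x_num_def sum_subtractf[symmetric]
    by (intro sum.cong refl) (simp add: left_diff_distrib diff_divide_distrib)
  finally show ?thesis .
qed

lemma hahnQ_three_term:
  assumes "a > -1" and "b > -1" and "p + 2 \<le> N"
  shows "hahnQ (p + 2) x a b N
    = (1 - hahn_rec_M a b N (p + 2)) * hahnQ (p + 1) x a b N
      + hahn_rec_M a b N (p + 2) * hahnQ p x a b N
      + hahn_rec_c a b N (p + 2) * (x * hahnQ (p + 1) x a b N)"
proof -
  let ?M = "hahn_rec_M a b N (p + 2)" and ?c = "hahn_rec_c a b N (p + 2)"
  let ?S = "\<lambda>f. \<Sum>j\<le>p + 2. f j * pochhammer (- x) j / hahn_den a N j"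
  have "hahnQ (p + 2) x a b N = ?S (hahn_num a b (p + 2))"
    by (rule hahnQ_eq_sum_atMost) simp
  also have "\<dots> = (1 - ?M) * ?S (hahn_num a b (p + 1)) + ?M * ?S (hahn_num a b p)
      + ?c * ?S (hahn_times_x_num a b N (p + 1))"
    unfolding hahn_num_recurrence[OF assms] sum_distrib_left sum.distrib[symmetric]
    by (intro sum.cong) (simp_all add: distrib_right add_divide_distrib mult.assoc)
  also have "\<dots> = (1 - ?M) * hahnQ (p + 1) x a b N + ?M * hahnQ p x a b N
      + ?c * (x * hahnQ (p + 1) x a b N)"
  proof -
    have "?S (hahn_num a b (p + 1)) = hahnQ (p + 1) x a b N"
      by (rule hahnQ_eq_sum_atMost[symmetric]) simp
    moreover have "?S (hahn_num a b p) = hahnQ p x a b N"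
      by (rule hahnQ_eq_sum_atMost[symmetric]) simp
    moreover have "?S (hahn_times_x_num a b N (p + 1)) = x * hahnQ (p + 1) x a b N"
      using times_hahnQ[of a "p + 1" N x b] assms(1,3) by simp
    ultimately show ?thesis
      by (simp only:)
  qed
  finally show ?thesis .
qed

lemma hahnQ_0 [simp]: "hahnQ 0 x a b N = 1"
  by (simp add: hahnQ_def)

lemma hahnQ_1: "hahnQ 1 x a b N = 1 - (a + b + 2) * x / ((a + 1) * real N)"
  unfolding hahnQ_def by (simp add: divide_inverse mult_ac)

lemma scaled_hahnQ_recurrence:
  fixes a b x :: real and m N :: nat
  assumes "a > -1" and "b > -1" and "2 \<le> m" and "m \<le> N"
  defines "w \<equiv> \<lambda>q. pochhammer (a + 1) q / fact q"
  shows "w m * hahnQ m x a b N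
    = (real m + a) / real m * (1 - hahn_rec_M a b N m + hahn_rec_c a b N m * x)
        * (w (m - 1) * hahnQ (m - 1) x a b N)
      + pochhammer (real m + a - 1) 2 / pochhammer (real m - 1) 2 * hahn_rec_M a b N m
        * (w (m - 2) * hahnQ (m - 2) x a b N)"
    (is "_ = ?K * (1 - ?M + ?c * x) * _ + ?L * ?M * _")
proof -
  obtain p where p: "m = p + 2"
    using assms(3) by (metis add.commute le_Suc_ex)
  have K: "?K * w (m - 1) = w m"
    unfolding w_def p by (simp add: pochhammer_Suc field_simps)
  have L: "?L * w (m - 2) = w m"
    unfolding w_def p by (simp add: pochhammer_Suc numeral_2_eq_2 field_simps)
  have "?K * (1 - ?M + ?c * x) * (w (m - 1) * hahnQ (m - 1) x a b N)
        + ?L * ?M * (w (m - 2) * hahnQ (m - 2) x a b N)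
      = (1 - ?M + ?c * x) * (?K * w (m - 1)) * hahnQ (m - 1) x a b N
        + ?M * (?L * w (m - 2)) * hahnQ (m - 2) x a b N"
    by (simp only: ac_simps)
  also have "\<dots> = w m * ((1 - ?M + ?c * x) * hahnQ (m - 1) x a b N + ?M * hahnQ (m - 2) x a b N)"
    unfolding K L by (simp add: algebra_simps)
  also have "\<dots> = w m * hahnQ m x a b N"
    using assms(4) unfolding p hahnQ_three_term[OF assms(1,2) assms(4)[unfolded p]]
    by (simp add: algebra_simps)
  finally show ?thesis ..
qed

lemma
  fixes \<alpha> \<beta> :: real and n k l h i :: nat
  assumes "k + l \<le> i" and "k + l \<le> n"
  defines "a \<equiv> \<alpha> + 2 * real l" and "b \<equiv> \<beta> + 2 * real k"
    and "m \<equiv> i - k - l" and "N \<equiv> n - k - l"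
  shows Kf_eq_hahn_rec: "Kf \<alpha> \<beta> n k l h i
      = (real m + a) / real m
        * (1 - hahn_rec_M a b N m + hahn_rec_c a b N m * (real n - real l - real h))"
    and Lf_eq_hahn_rec: "Lf \<alpha> \<beta> n k l i
      = pochhammer (real m + a - 1) 2 / pochhammer (real m - 1) 2 * hahn_rec_M a b N m"
proof -
  have m: "real i = real m + real k + real l" and N: "real n = real N + real k + real l"
    using assms(1,2) by (simp_all add: m_def N_def of_nat_diff)
  have M: "Mf \<alpha> \<beta> n k l i = hahn_rec_M a b N m"
    unfolding Mf_def hahn_rec_M_def m N a_def b_def by (simp add: algebra_simps)
  have K_atoms: "\<alpha> + real l + real i - real k = real m + a"
    "real i - real k - real l = real m"
    "pochhammer (2 * real i + \<alpha> + \<beta> - 1) 2 = pochhammer (2 * real m + a + b - 1) 2"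
    "real i + real k + real l + \<alpha> + \<beta> = real m + a + b"
    "real i - real n - 1 = real m - real N - 1"
    unfolding m N a_def b_def by (simp_all add: algebra_simps)
  show "Kf \<alpha> \<beta> n k l h i
      = (real m + a) / real m
        * (1 - hahn_rec_M a b N m + hahn_rec_c a b N m * (real n - real l - real h))"
    unfolding Kf_def K_atoms M hahn_rec_c_def by (simp add: divide_inverse algebra_simps)
  have L_atoms: "pochhammer (\<alpha> + real l + real i - real k - 1) 2 = pochhammer (real m + a - 1) 2"
    "pochhammer (real i - real k - real l - 1) 2 = pochhammer (real m - 1) 2"
    unfolding m a_def by (simp_all add: algebra_simps)
  show "Lf \<alpha> \<beta> n k l i
      = pochhammer (real m + a - 1) 2 / pochhammer (real m - 1) 2 * hahn_rec_M a b N m"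
    unfolding Lf_def L_atoms M ..
qed

lemma cc_first_step:
  assumes "k + l + 1 \<le> n" and "\<alpha> > -1"
  shows "cc \<alpha> \<beta> n k l (k + l + 1) h = cc \<alpha> \<beta> n k l (k + l) h *
      (\<alpha> + 2 * real l + 1 - ((\<alpha> + \<beta> + 1) + 2 * real k + 2 * real l + 1) * (real l + real h - real n)
        / (real k + real l - real n))"
proof -
  define a where "a = \<alpha> + 2 * real l"
  define b where "b = \<beta> + 2 * real k"
  define N where "N = n - k - l"
  define x where "x = real n - real l - real h"
  have "x = - (real l + real h - real n)" and "real N = - (real k + real l - real n)"
    and "a + b + 2 = (\<alpha> + \<beta> + 1) + 2 * real k + 2 * real l + 1"
    using assms(1) by (simp_all add: x_def N_def a_def b_def of_nat_diff)
  then have "(a + b + 2) * x / real N = ((\<alpha> + \<beta> + 1) + 2 * real k + 2 * real l + 1)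
      * (real l + real h - real n) / (real k + real l - real n)"
    by (simp only: mult_minus_right minus_divide_divide)
  moreover have "(a + 1) * hahnQ 1 x a b N = a + 1 - (a + b + 2) * x / real N"
    using assms(2) unfolding hahnQ_1 by (simp add: a_def right_diff_distrib)
  ultimately have "(\<alpha> + 2 * real l + 1) * hahnQ 1 x a b N = \<alpha> + 2 * real l + 1
      - ((\<alpha> + \<beta> + 1) + 2 * real k + 2 * real l + 1) * (real l + real h - real n) / (real k + real l - real n)"
    by (simp add: a_def)
  then show ?thesis
    unfolding cc_def a_def b_def N_def x_def by simp
qed

lemma cc_recurrence:
  assumes "k + l \<le> n" and "\<alpha> > -1" and "\<beta> > -1" and "k + l + 2 \<le> i" and "i \<le> n"
  shows "cc \<alpha> \<beta> n k l i h
    = Kf \<alpha> \<beta> n k l h i * cc \<alpha> \<beta> n k l (i - 1) h + Lf \<alpha> \<beta> n k l i * cc \<alpha> \<beta> n k l (i - 2) h"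
proof -
  define a where "a = \<alpha> + 2 * real l"
  define b where "b = \<beta> + 2 * real k"
  define N where "N = n - k - l"
  define x where "x = real n - real l - real h"
  define m where "m = i - k - l"
  define w where "w = (\<lambda>q. pochhammer (a + 1) q / fact q :: real)"
  have cc: "cc \<alpha> \<beta> n k l j h
      = real (n - k - l choose (h - k)) / real (n choose h)
        * (w (j - k - l) * hahnQ (j - k - l) x a b N)" for j
    unfolding cc_def a_def b_def N_def x_def w_def by (simp add: ac_simps)
  have shift: "i - k - l = m" "i - 1 - k - l = m - 1" "i - 2 - k - l = m - 2"
    and "2 \<le> m" and "m \<le> N" and "k + l \<le> i"
    using assms(4,5) by (auto simp: m_def N_def)
  have w: "pochhammer (a + 1) q / fact q = w q" for q
    by (simp add: w_def)
  note K = Kf_eq_hahn_rec[OF \<open>k + l \<le> i\<close> assms(1), of \<alpha> \<beta> h,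
      folded a_def b_def m_def N_def x_def]
  note L = Lf_eq_hahn_rec[OF \<open>k + l \<le> i\<close> assms(1), of \<alpha> \<beta>,
      folded a_def b_def m_def N_def]
  have "w m * hahnQ m x a b N = Kf \<alpha> \<beta> n k l h i * (w (m - 1) * hahnQ (m - 1) x a b N)
      + Lf \<alpha> \<beta> n k l i * (w (m - 2) * hahnQ (m - 2) x a b N)"
    using scaled_hahnQ_recurrence[OF _ _ \<open>2 \<le> m\<close> \<open>m \<le> N\<close>, of a b x] assms(2,3)
    unfolding K L w by (simp add: a_def b_def)
  then show ?thesis
    unfolding cc shift by (simp add: algebra_simps)
qed

theorem theorem2:
  fixes n k l h :: nat and \<alpha> \<beta> :: real
  assumes "k + l \<le> n" and "\<alpha> > -1" and "\<beta> > -1"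
    and "k \<le> h" and "h \<le> n - l"
  shows "(cc \<alpha> \<beta> n k l (k + l) h = real (n - k - l choose (h - k)) / real (n choose h))
    \<and> (k + l + 1 \<le> n \<longrightarrow>
           cc \<alpha> \<beta> n k l (k + l + 1) h =
             cc \<alpha> \<beta> n k l (k + l) h *
               (\<alpha> + 2 * real l + 1
                - ((\<alpha> + \<beta> + 1) + 2 * real k + 2 * real l + 1) * (real l + real h - real n)
                  / (real k + real l - real n)))
    \<and> (\<forall>i. k + l + 2 \<le> i \<and> i \<le> n \<longrightarrow>
           cc \<alpha> \<beta> n k l i h =
             Kf \<alpha> \<beta> n k l h i * cc \<alpha> \<beta> n k l (i - 1) h
             + Lf \<alpha> \<beta> n k l i * cc \<alpha> \<beta> n k l (i - 2) h)"
  using cc_first_step[OF _ assms(2)] cc_recurrence[OF assms(1-3)] by (simp add: cc_def)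

end
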